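(* Let $\sigma\colon O_1\to O_2$ be an isomorphism of finite $Act$-labelled posets, let $c_1,c_1'$ be causal markings, $K\subseteq|O_1|$, $a\in Act$, $e\in\mathcal{E}\setminus X_{O_1}$ and $e'\in\mathcal{E}\setminus X_{O_2}$. Then $O_1\rhd c_1\xrightarrow{K\vdash e_a}\delta(O_1,K,e_a)\rhd c_1'$ in the concrete causal case graph if and only if $O_2\rhd c_1\sigma\xrightarrow{\sigma(K)\vdash e'_a}\delta(O_2,\sigma(K),e'_a)\rhd c_1'\,\sigma[e_a\mapsto e'_a]$ in the concrete causal case graph.
   Context: Fix a set $Act$ of action labels and an infinite set $\mathcal{E}$ of event names. A finite $Act$-labelled poset is $O=(X_O,\preccurlyeq_O,l_O)$ with $X_O\subseteq\mathcal{E}$ finite, $\preccurlyeq_O$ a partial order on $X_O$ and $l_O\colon X_O\to Act$; write $|O|=\{(x,l_O(x)):x\in X_O\}$, write $x_a$ for $(x,a)$, and regard $O$ also as a poset on $|O|$. A morphism $\sigma\colon O\to O'$ is a map $X_O\to X_{O'}$ preserving order and labels, acting on labelled events by $\sigma(x_a)=\sigma(x)_a$; an isomorphism is a bijective morphism whose inverse is a morphism. For $K\subseteq|O|$, $\max_O K$ is the set of maximal elements of $K$; $K$ is down-closed w.r.t. $O$ if $y\in K$ and $x\preccurlyeq_O y$ imply $x\in K$. A net is $N=(S,T,F,l)$ with disjoint sets $S$ (places) and $T$ (transitions), $F\subseteq(S\times T)\cup(T\times S)$, $l\colon T\to Act$; ${}^\bullet t=\{s:(s,t)\in F\}$ and $t^\bullet=\{s:(t,s)\in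 F\}$ are assumed nonempty. Fix a net $N$. A causal marking is a finite set $c$ of pairs written $K\vdash s$ with $s\in S$ and $K$ a finite subset of $\mathcal{E}\times Act$; $\mathcal{K}(c)$ is the union of all cause sets $K$ in $c$, $|c|$ is the set of places occurring in $c$, and for a set of places $m$, $K\vdash m=\{K\vdash s:s\in m\}$. For a map $\sigma$ on events, $c\sigma=\{\sigma(K)\vdash s: K\vdash s\in c\}$. A P-marking is a pair $O\rhd c$ of a finite labelled poset $O$ and a causal marking $c$ such that every cause set of $c$ is a down-closed subset of $|O|$. For $K\subseteq|O|$, $e\in\mathcal{E}\setminus X_O$, $a\in Act$, $\delta(O,K,e_a)$ is the labelled poset obtained from $O$ by adding the event $e$ with label $a$ and the pairs $k\preccurlyeq e_a$ for $k\in K$, then taking the reflexive-transitive closure. The concrete causal case graph of $N$ is the smallest transition relation on P-markings closed under the rule: if $t\in T$, $O\rhd c\cup c'$ is a P-marking, $|c|={}^\bullet t$, $a=l(t)$, $e\in\mathcal{E}\setminus X_O$ and $K=\max_O\mathcal{K}(c)$, then $O\rhd c\cup c'\xrightarrow{K\vdash e_a}\delta(O,K,e_a)\rhd(\mathcal{K}(c)\cup\{e_a\}\vdash t^\bullet)\cup c'$. For $\sigma\colon O_1\to O_2$ and $e\notin X_{O_1}$, $e'\notin X_{O_2}$, $\sigma[e_a\mapsto e'_a]$ is the map on $X_{O_1}\cup\{e\}$ that agrees with $\sigma$ on $X_{O_1}$ and sends $e$ to $e'$. *)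

theory Defs
  imports Main "HOL-Library.Infinite_Typeclass"
begin

text \<open>The labelling is a partial map
  'e => 'act option whose domain is X_O, so |P| is exactly the graph of the labelling.\<close>

record ('e, 'act) lposet =
  lab :: "'e \<Rightarrow> 'act option"
  ord :: "('e \<times> 'e) set"

definition ev :: "('e, 'act) lposet \<Rightarrow> 'e set" where
  "ev P = dom (lab P)"

definition lev :: "('e, 'act) lposet \<Rightarrow> ('e \<times> 'act) set" where
  "lev P = {(x, a). lab P x = Some a}"

definition fin_lposet :: "('e, 'act) lposet \<Rightarrow> bool" where
  "fin_lposet P \<longleftrightarrow> finite (ev P) \<and> ord P \<subseteq> ev P \<times> ev P \<and>
     refl_on (ev P) (ord P) \<and> antisym (ord P) \<and> trans (ord P)"

definition lle :: "('e, 'act) lposet \<Rightarrow> ('e \<times> 'act) \<Rightarrow> ('e \<times> 'act) \<Rightarrow> bool" where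
  "lle P k k' \<longleftrightarrow> k \<in> lev P \<and> k' \<in> lev P \<and> (fst k, fst k') \<in> ord P"

definition maxO :: "('e, 'act) lposet \<Rightarrow> ('e \<times> 'act) set \<Rightarrow> ('e \<times> 'act) set" where
  "maxO P K = {k \<in> K. \<forall>k'\<in>K. lle P k k' \<longrightarrow> k' = k}"

definition down_closed :: "('e, 'act) lposet \<Rightarrow> ('e \<times> 'act) set \<Rightarrow> bool" where
  "down_closed P K \<longleftrightarrow> (\<forall>y\<in>K. \<forall>x. lle P x y \<longrightarrow> x \<in> K)"

definition morphism :: "('e \<Rightarrow> 'e) \<Rightarrow> ('e, 'act) lposet \<Rightarrow> ('e, 'act) lposet \<Rightarrow> bool" where
  "morphism \<sigma> P P' \<longleftrightarrow>
     (\<forall>x\<in>ev P. \<sigma> x \<in> ev P' \<and> lab P' (\<sigma> x) = lab P x) \<and>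
     (\<forall>x\<in>ev P. \<forall>y\<in>ev P. (x, y) \<in> ord P \<longrightarrow> (\<sigma> x, \<sigma> y) \<in> ord P')"

definition isomorphism :: "('e \<Rightarrow> 'e) \<Rightarrow> ('e, 'act) lposet \<Rightarrow> ('e, 'act) lposet \<Rightarrow> bool" where
  "isomorphism \<sigma> P P' \<longleftrightarrow> bij_betw \<sigma> (ev P) (ev P') \<and> morphism \<sigma> P P' \<and>
     morphism (the_inv_into (ev P) \<sigma>) P' P"

definition lmap :: "('e \<Rightarrow> 'e) \<Rightarrow> ('e \<times> 'act) set \<Rightarrow> ('e \<times> 'act) set" where
  "lmap \<sigma> K = (\<lambda>(x, a). (\<sigma> x, a)) ` K"

definition delta :: "('e, 'act) lposet \<Rightarrow> ('e \<times> 'act) set \<Rightarrow> 'e \<Rightarrow> 'act \<Rightarrow> ('e, 'act) lposet" where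
  "delta P K e a = \<lparr> lab = (lab P)(e \<mapsto> a),
     ord = Id_on (insert e (ev P)) \<union> (ord P \<union> (fst ` K) \<times> {e})\<^sup>+ \<rparr>"

text \<open>Places and transitions live in distinct types, hence are disjoint;
  the flow relation F is split into its S x T and T x S parts.\<close>

record ('s, 't, 'act) net =
  places :: "'s set"
  transs :: "'t set"
  flow_in :: "('s \<times> 't) set"
  flow_out :: "('t \<times> 's) set"
  tlab :: "'t \<Rightarrow> 'act"

definition preset :: "('s, 't, 'act) net \<Rightarrow> 't \<Rightarrow> 's set" where
  "preset N t = {s. (s, t) \<in> flow_in N}"

definition postset :: "('s, 't, 'act) net \<Rightarrow> 't \<Rightarrow> 's set" where
  "postset N t = {s. (t, s) \<in> flow_out N}"

definition wf_net :: "('s, 't, 'act) net \<Rightarrow> bool" where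
  "wf_net N \<longleftrightarrow> flow_in N \<subseteq> places N \<times> transs N \<and> flow_out N \<subseteq> transs N \<times> places N \<and>
     (\<forall>t\<in>transs N. preset N t \<noteq> {} \<and> postset N t \<noteq> {})"

text \<open>A causal marking is a finite set of pairs (K, s), written K |- s.\<close>
type_synonym ('e, 'act, 's) cmarking = "(('e \<times> 'act) set \<times> 's) set"

definition causal_marking :: "('s, 't, 'act) net \<Rightarrow> ('e, 'act, 's) cmarking \<Rightarrow> bool" where
  "causal_marking N c \<longleftrightarrow> finite c \<and> (\<forall>(K, s)\<in>c. s \<in> places N \<and> finite K)"

definition causes :: "('e, 'act, 's) cmarking \<Rightarrow> ('e \<times> 'act) set" where
  "causes c = \<Union> (fst ` c)"

definition cplaces :: "('e, 'act, 's) cmarking \<Rightarrow> 's set" where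
  "cplaces c = snd ` c"

definition entails :: "('e \<times> 'act) set \<Rightarrow> 's set \<Rightarrow> ('e, 'act, 's) cmarking" where
  "entails K m = (\<lambda>s. (K, s)) ` m"

definition cmap :: "('e, 'act, 's) cmarking \<Rightarrow> ('e \<Rightarrow> 'e) \<Rightarrow> ('e, 'act, 's) cmarking" where
  "cmap c \<sigma> = (\<lambda>(K, s). (lmap \<sigma> K, s)) ` c"

definition pmarking :: "('s, 't, 'act) net \<Rightarrow> ('e, 'act) lposet \<Rightarrow> ('e, 'act, 's) cmarking \<Rightarrow> bool" where
  "pmarking N P c \<longleftrightarrow> fin_lposet P \<and> causal_marking N c \<and>
     (\<forall>(K, s)\<in>c. K \<subseteq> lev P \<and> down_closed P K)"

text \<open>Transitions between P-markings (P, c), labelled by (K, (e, a)) standing for K |- e_a.\<close>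
inductive ccg :: "('s, 't, 'act) net \<Rightarrow> ('e, 'act) lposet \<times> ('e, 'act, 's) cmarking
    \<Rightarrow> ('e \<times> 'act) set \<times> ('e \<times> 'act)
    \<Rightarrow> ('e, 'act) lposet \<times> ('e, 'act, 's) cmarking \<Rightarrow> bool"
  for N where
  fire: "\<lbrakk> t \<in> transs N; pmarking N P (c \<union> c'); cplaces c = preset N t; a = tlab N t;
           e \<notin> ev P; K = maxO P (causes c) \<rbrakk> \<Longrightarrow>
         ccg N (P, c \<union> c') (K, (e, a))
             (delta P K e a, entails (causes c \<union> {(e, a)}) (postset N t) \<union> c')"

end

theory Submission
  imports Defs
begin

text \<open>An isomorphism \<open>\<sigma>\<close> transports every ingredient of the firing rule (P-markings,
  maximal causes, down-closed cause sets), so a step of \<open>O\<^sub>1\<close> creating \<open>e\<close> maps to a step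
  of \<open>O\<^sub>2\<close> creating \<open>e'\<close> once \<open>e\<close> is renamed to \<open>e'\<close>. The converse is the same transport
  along the inverse isomorphism, because \<open>\<sigma>\<^sup>-\<^sup>1[e' \<mapsto> e]\<close> undoes \<open>\<sigma>[e \<mapsto> e']\<close> on all events
  occurring in the markings.\<close>

lemma lmap_eq_image_apfst: "lmap \<sigma> K = apfst \<sigma> ` K"
  unfolding lmap_def by (rule image_cong) auto

lemma lmap_cong: "(\<And>x. x \<in> fst ` K \<Longrightarrow> \<sigma> x = \<tau> x) \<Longrightarrow> lmap \<sigma> K = lmap \<tau> K"
  unfolding lmap_def by force

lemma lmap_lmap_inverse:
  "(\<And>x. x \<in> fst ` K \<Longrightarrow> \<rho> (\<sigma> x) = x) \<Longrightarrow> lmap \<rho> (lmap \<sigma> K) = K"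
  unfolding lmap_def by force

lemma fst_lev: "fst ` lev P = ev P"
  unfolding lev_def ev_def by force

lemma maximal_elements_image:
  assumes "inj_on f S" and "\<And>p q. p \<in> S \<Longrightarrow> q \<in> S \<Longrightarrow> R' (f p) (f q) \<longleftrightarrow> R p q"
  shows "{k \<in> f ` S. \<forall>k'\<in>f ` S. R' k k' \<longrightarrow> k' = k} = f ` {k \<in> S. \<forall>k'\<in>S. R k k' \<longrightarrow> k' = k}"
  using assms by (auto simp: inj_on_eq_iff)

lemma morphism_cong:
  "(\<And>x. x \<in> ev P \<Longrightarrow> f x = g x) \<Longrightarrow> morphism f P P' \<longleftrightarrow> morphism g P P'"
  by (simp add: morphism_def)

lemma isomorphism_bij_betw: "isomorphism \<sigma> P P' \<Longrightarrow> bij_betw \<sigma> (ev P) (ev P')"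
  by (simp add: isomorphism_def)

lemma isomorphism_lab: "isomorphism \<sigma> P P' \<Longrightarrow> x \<in> ev P \<Longrightarrow> lab P' (\<sigma> x) = lab P x"
  by (simp add: isomorphism_def morphism_def)

lemma isomorphism_apply: "isomorphism \<sigma> P P' \<Longrightarrow> x \<in> ev P \<Longrightarrow> \<sigma> x \<in> ev P'"
  using isomorphism_bij_betw by (rule bij_betw_apply)

lemma isomorphism_the_inv_into_cancel:
  "isomorphism \<sigma> P P' \<Longrightarrow> x \<in> ev P \<Longrightarrow> the_inv_into (ev P) \<sigma> (\<sigma> x) = x"
  using isomorphism_bij_betw bij_betw_imp_inj_on the_inv_into_f_f by metis

lemma isomorphism_the_inv_into:
  assumes iso: "isomorphism \<sigma> P P'"
  shows "isomorphism (the_inv_into (ev P) \<sigma>) P' P"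
proof -
  let ?\<rho> = "the_inv_into (ev P) \<sigma>"
  have bij: "bij_betw ?\<rho> (ev P') (ev P)"
    using iso by (simp add: isomorphism_def bij_betw_the_inv_into)
  have "the_inv_into (ev P') ?\<rho> x = \<sigma> x" if "x \<in> ev P" for x
    using bij_betw_imp_inj_on[OF bij] isomorphism_the_inv_into_cancel[OF iso that]
      isomorphism_apply[OF iso that]
    by (rule the_inv_into_f_eq)
  then have "morphism (the_inv_into (ev P') ?\<rho>) P P' \<longleftrightarrow> morphism \<sigma> P P'"
    by (rule morphism_cong)
  with bij iso show ?thesis
    by (simp add: isomorphism_def)
qed

lemma isomorphism_ord_iff:
  assumes iso: "isomorphism \<sigma> P P'" and "x \<in> ev P" "y \<in> ev P"
  shows "(\<sigma> x, \<sigma> y) \<in> ord P' \<longleftrightarrow> (x, y) \<in> ord P"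
proof
  let ?\<rho> = "the_inv_into (ev P) \<sigma>"
  assume "(\<sigma> x, \<sigma> y) \<in> ord P'"
  moreover have "\<sigma> x \<in> ev P'" "\<sigma> y \<in> ev P'"
    using isomorphism_apply[OF iso] assms(2,3) by auto
  ultimately have "(?\<rho> (\<sigma> x), ?\<rho> (\<sigma> y)) \<in> ord P"
    using iso unfolding isomorphism_def morphism_def by blast
  then show "(x, y) \<in> ord P"
    using isomorphism_the_inv_into_cancel[OF iso] assms(2,3) by simp
next
  assume "(x, y) \<in> ord P"
  then show "(\<sigma> x, \<sigma> y) \<in> ord P'"
    using assms unfolding isomorphism_def morphism_def by blast
qed

lemma isomorphism_lle_iff:
  assumes iso: "isomorphism \<sigma> P P'" and "fst p \<in> ev P" "fst q \<in> ev P"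
  shows "lle P' (apfst \<sigma> p) (apfst \<sigma> q) \<longleftrightarrow> lle P p q"
  using isomorphism_ord_iff[OF assms] isomorphism_lab[OF iso] assms(2,3)
  by (cases p; cases q) (simp add: lle_def lev_def)

lemma lev_isomorphism:
  assumes iso: "isomorphism \<sigma> P P'"
  shows "lev P' = lmap \<sigma> (lev P)"
proof
  show "lmap \<sigma> (lev P) \<subseteq> lev P'"
  proof (clarsimp simp: lmap_def)
    fix x a assume "(x, a) \<in> lev P"
    then have "x \<in> ev P" "lab P x = Some a" by (auto simp: lev_def ev_def)
    then show "(\<sigma> x, a) \<in> lev P'" using isomorphism_lab[OF iso] by (simp add: lev_def)
  qed
next
  show "lev P' \<subseteq> lmap \<sigma> (lev P)"
  proof (clarify)
    fix y a assume "(y, a) \<in> lev P'"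
    then have "y \<in> ev P'" "lab P' y = Some a" by (auto simp: lev_def ev_def)
    moreover have "ev P' = \<sigma> ` ev P"
      using isomorphism_bij_betw[OF iso] by (simp add: bij_betw_def)
    ultimately obtain x where "x \<in> ev P" "y = \<sigma> x" "lab P x = Some a"
      using isomorphism_lab[OF iso] by auto
    then show "(y, a) \<in> lmap \<sigma> (lev P)"
      by (force simp: lmap_def lev_def)
  qed
qed

lemma down_closed_isomorphism:
  assumes iso: "isomorphism \<sigma> P P'" and "S \<subseteq> lev P" and "down_closed P S"
  shows "down_closed P' (lmap \<sigma> S)"
  unfolding down_closed_def
proof (intro ballI allI impI)
  fix w z assume "w \<in> lmap \<sigma> S" and le: "lle P' z w"
  then obtain y b where yb: "(y, b) \<in> S" "w = (\<sigma> y, b)"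
    by (auto simp: lmap_def)
  have "z \<in> lmap \<sigma> (lev P)"
    using le lev_isomorphism[OF iso] by (simp add: lle_def)
  then obtain x c where xc: "(x, c) \<in> lev P" "z = (\<sigma> x, c)"
    by (auto simp: lmap_def)
  have "x \<in> ev P" "y \<in> ev P"
    using xc(1) yb(1) assms(2) fst_lev by force+
  then have "lle P (x, c) (y, b)"
    using le xc yb isomorphism_lle_iff[OF iso, of "(x, c)" "(y, b)"] by simp
  then have "(x, c) \<in> S"
    using assms(3) yb(1) by (auto simp: down_closed_def)
  then show "z \<in> lmap \<sigma> S"
    using xc(2) by (force simp: lmap_def)
qed

lemma maxO_isomorphism:
  assumes iso: "isomorphism \<sigma> P P'" and S: "fst ` S \<subseteq> ev P"
  shows "maxO P' (lmap \<sigma> S) = lmap \<sigma> (maxO P S)"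
proof -
  have inj: "inj_on \<sigma> (ev P)"
    using isomorphism_bij_betw[OF iso] by (rule bij_betw_imp_inj_on)
  have "inj_on (apfst \<sigma>) S"
  proof (rule inj_onI)
    fix p q assume "p \<in> S" "q \<in> S" "apfst \<sigma> p = apfst \<sigma> q"
    moreover from \<open>p \<in> S\<close> \<open>q \<in> S\<close> have "fst p \<in> ev P" "fst q \<in> ev P" using S by auto
    ultimately show "p = q" using inj by (auto simp: prod_eq_iff inj_on_eq_iff)
  qed
  moreover have "lle P' (apfst \<sigma> p) (apfst \<sigma> q) \<longleftrightarrow> lle P p q" if "p \<in> S" "q \<in> S" for p q
    using that S by (intro isomorphism_lle_iff[OF iso]) auto
  ultimately show ?thesis
    unfolding maxO_def lmap_eq_image_apfst by (rule maximal_elements_image)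
qed

lemma causes_cmap: "causes (cmap c \<sigma>) = lmap \<sigma> (causes c)"
  unfolding causes_def cmap_def lmap_def by force

lemma causes_Un: "causes (c \<union> d) = causes c \<union> causes d"
  unfolding causes_def by blast

lemma cplaces_cmap: "cplaces (cmap c \<sigma>) = cplaces c"
  unfolding cplaces_def cmap_def by force

lemma cmap_Un: "cmap (c \<union> d) \<sigma> = cmap c \<sigma> \<union> cmap d \<sigma>"
  unfolding cmap_def by blast

lemma cmap_entails: "cmap (entails K m) \<sigma> = entails (lmap \<sigma> K) m"
  unfolding cmap_def entails_def by force

lemma cmap_cong:
  assumes "\<And>x. x \<in> fst ` causes c \<Longrightarrow> \<sigma> x = \<tau> x"
  shows "cmap c \<sigma> = cmap c \<tau>"
proof -
  have "lmap \<sigma> K = lmap \<tau> K" if "(K, s) \<in> c" for K s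
    using that assms by (intro lmap_cong) (force simp: causes_def)
  then show ?thesis
    unfolding cmap_def by (intro image_cong) auto
qed

lemma cmap_cmap_inverse:
  assumes "\<And>x. x \<in> fst ` causes c \<Longrightarrow> \<rho> (\<sigma> x) = x"
  shows "cmap (cmap c \<sigma>) \<rho> = c"
proof -
  have inv: "lmap \<rho> (lmap \<sigma> K) = K" if "(K, s) \<in> c" for K s
    using that assms by (intro lmap_lmap_inverse) (force simp: causes_def)
  show ?thesis
    unfolding cmap_def image_image by (rule trans[OF image_cong image_ident]) (auto simp: inv)
qed

lemma pmarking_causes_ev:
  assumes "pmarking N P c"
  shows "fst ` causes c \<subseteq> ev P"
proof -
  have "k \<in> lev P" if "(K, s) \<in> c" "k \<in> K" for K s k
    using assms that unfolding pmarking_def by blast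
  then have "causes c \<subseteq> lev P"
    unfolding causes_def by auto
  then have "fst ` causes c \<subseteq> fst ` lev P"
    by (rule image_mono)
  then show ?thesis
    by (simp only: fst_lev)
qed

lemma causal_marking_cmap: "causal_marking N c \<Longrightarrow> causal_marking N (cmap c \<sigma>)"
  unfolding causal_marking_def cmap_def lmap_def by auto

lemma pmarking_isomorphism:
  assumes pm: "pmarking N P c" and iso: "isomorphism \<sigma> P P'" and "fin_lposet P'"
  shows "pmarking N P' (cmap c \<sigma>)"
proof -
  have "lmap \<sigma> K \<subseteq> lev P' \<and> down_closed P' (lmap \<sigma> K)" if "(K, s) \<in> c" for K s
  proof -
    have "K \<subseteq> lev P" "down_closed P K" using pm that by (auto simp: pmarking_def)
    then show ?thesis
      using lev_isomorphism[OF iso] down_closed_isomorphism[OF iso] by (auto simp: lmap_def)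
  qed
  then show ?thesis
    using pm assms(3) causal_marking_cmap by (auto simp: pmarking_def cmap_def)
qed

inductive_cases ccg_stepE: "ccg N (P, d) (K, (e, a)) (P', d')"

lemma ccg_isomorphism:
  assumes step: "ccg N (O1, c1) (K, (e, a)) (O1', c1')"
    and iso: "isomorphism \<sigma> O1 O2" and fin: "fin_lposet O2" and e': "e' \<notin> ev O2"
  shows "ccg N (O2, cmap c1 \<sigma>) (lmap \<sigma> K, (e', a))
           (delta O2 (lmap \<sigma> K) e' a, cmap c1' (\<sigma>(e := e')))"
proof -
  from step obtain t c c'' where c1: "c1 = c \<union> c''" and t: "t \<in> transs N"
    and pm: "pmarking N O1 (c \<union> c'')" and pre: "cplaces c = preset N t" and e: "e \<notin> ev O1"
    and K: "K = maxO O1 (causes c)" and a: "a = tlab N t"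
    and c1': "c1' = entails (insert (e, a) (causes c)) (postset N t) \<union> c''"
    by (elim ccg_stepE) blast
  have c_ev: "fst ` causes c \<subseteq> ev O1" and c''_ev: "fst ` causes c'' \<subseteq> ev O1"
    using pmarking_causes_ev[OF pm] by (simp_all add: causes_Un image_Un)
  have "ccg N (O2, cmap c \<sigma> \<union> cmap c'' \<sigma>) (maxO O2 (causes (cmap c \<sigma>)), (e', a))
     (delta O2 (maxO O2 (causes (cmap c \<sigma>))) e' a,
      entails (causes (cmap c \<sigma>) \<union> {(e', a)}) (postset N t) \<union> cmap c'' \<sigma>)"
  proof (rule ccg.fire[OF t])
    show "pmarking N O2 (cmap c \<sigma> \<union> cmap c'' \<sigma>)"
      using pmarking_isomorphism[OF pm iso fin] by (simp add: cmap_Un)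
  qed (use pre a e' in \<open>simp_all add: cplaces_cmap\<close>)
  moreover have "maxO O2 (causes (cmap c \<sigma>)) = lmap \<sigma> K"
    using maxO_isomorphism[OF iso c_ev] K by (simp add: causes_cmap)
  moreover have "cmap c'' (\<sigma>(e := e')) = cmap c'' \<sigma>"
    and "lmap (\<sigma>(e := e')) (causes c) = lmap \<sigma> (causes c)"
    using e c_ev c''_ev by (auto intro!: cmap_cong lmap_cong)
  ultimately show ?thesis
    using c1 c1' by (simp add: cmap_Un cmap_entails causes_cmap lmap_def)
qed

theorem lemma1:
  fixes N :: "('s, 't, 'act) net"
    and O1 O2 :: "('e::infinite, 'act) lposet"
    and \<sigma> :: "'e \<Rightarrow> 'e"
    and c1 c1' :: "('e, 'act, 's) cmarking"
    and K :: "('e \<times> 'act) set" and a :: 'act and e e' :: 'e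
  assumes "wf_net N"
    and "fin_lposet O1" and "fin_lposet O2"
    and "isomorphism \<sigma> O1 O2"
    and "causal_marking N c1" and "causal_marking N c1'"
    and "K \<subseteq> lev O1"
    and "e \<notin> ev O1" and "e' \<notin> ev O2"
    and "fst ` causes c1 \<subseteq> ev O1"
    and "fst ` causes c1' \<subseteq> insert e (ev O1)"
  shows "ccg N (O1, c1) (K, (e, a)) (delta O1 K e a, c1')
     \<longleftrightarrow> ccg N (O2, cmap c1 \<sigma>) (lmap \<sigma> K, (e', a))
            (delta O2 (lmap \<sigma> K) e' a, cmap c1' (\<sigma>(e := e')))"
proof
  assume "ccg N (O1, c1) (K, (e, a)) (delta O1 K e a, c1')"
  then show "ccg N (O2, cmap c1 \<sigma>) (lmap \<sigma> K, (e', a))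
      (delta O2 (lmap \<sigma> K) e' a, cmap c1' (\<sigma>(e := e')))"
    using assms(4,3,9) by (rule ccg_isomorphism)
next
  assume step: "ccg N (O2, cmap c1 \<sigma>) (lmap \<sigma> K, (e', a))
      (delta O2 (lmap \<sigma> K) e' a, cmap c1' (\<sigma>(e := e')))"
  let ?\<rho> = "the_inv_into (ev O1) \<sigma>"
  have \<rho>\<sigma>: "?\<rho> (\<sigma> x) = x" if "x \<in> ev O1" for x
    using assms(4) that by (rule isomorphism_the_inv_into_cancel)
  have "fst ` K \<subseteq> ev O1"
    using image_mono[OF assms(7), of fst] by (simp only: fst_lev)
  then have c1: "cmap (cmap c1 \<sigma>) ?\<rho> = c1" and K: "lmap ?\<rho> (lmap \<sigma> K) = K"
    using \<rho>\<sigma> assms(10) by (auto intro!: cmap_cmap_inverse lmap_lmap_inverse)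
  have "(?\<rho>(e' := e)) ((\<sigma>(e := e')) x) = x" if "x \<in> insert e (ev O1)" for x
    using that \<rho>\<sigma> isomorphism_apply[OF assms(4)] assms(8,9) by auto
  then have c1': "cmap (cmap c1' (\<sigma>(e := e'))) (?\<rho>(e' := e)) = c1'"
    using assms(11) by (auto intro!: cmap_cmap_inverse)
  from ccg_isomorphism[OF step isomorphism_the_inv_into[OF assms(4)] assms(2,8)]
  show "ccg N (O1, c1) (K, (e, a)) (delta O1 K e a, c1')"
    by (simp only: c1 K c1')
qed

end
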